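(* Let $G$ be a graph with minimum degree $\delta$ and order $n$, where $n\ge 2\delta+2$. Then $\gamma_{\rm i}(G)=n-\delta$ if and only if $G$ contains a spanning subgraph isomorphic to $K_{\delta,n-\delta}$ such that the part of the bipartition of size $n-\delta$ is an independent set in $G$.
   Context: All graphs are finite and simple. Indicated domination game on $G$: two players, Dominator and Staller, alternate. In each round Dominator indicates a vertex $v$ not yet dominated by the vertices previously selected by Staller (a vertex dominates itself and its neighbors), and Staller must select a vertex of the closed neighborhood $N[v]$, adding it to a set $D$. The game ends when $D$ is a dominating set of $G$. Dominator wants to minimize $|D|$ and Staller to maximize it; the size of $D$ under optimal play of both is the indicated domination number $\gamma_{\rm i}(G)$. *)

theory Defs
  imports Main
begin

definition simple_graph :: "'a set \<Rightarrow> ('a \<Rightarrow> 'a \<Rightarrow> bool) \<Rightarrow> bool" where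
  "simple_graph V E \<longleftrightarrow> finite V \<and> (\<forall>u v. E u v \<longrightarrow> u \<in> V \<and> v \<in> V)
     \<and> (\<forall>u v. E u v \<longrightarrow> E v u) \<and> (\<forall>v. \<not> E v v)"

definition closed_nbhd :: "'a set \<Rightarrow> ('a \<Rightarrow> 'a \<Rightarrow> bool) \<Rightarrow> 'a \<Rightarrow> 'a set" where
  "closed_nbhd V E v = {u \<in> V. u = v \<or> E v u}"

definition degree :: "'a set \<Rightarrow> ('a \<Rightarrow> 'a \<Rightarrow> bool) \<Rightarrow> 'a \<Rightarrow> nat" where
  "degree V E v = card {u \<in> V. E v u}"

definition min_degree :: "'a set \<Rightarrow> ('a \<Rightarrow> 'a \<Rightarrow> bool) \<Rightarrow> nat" where
  "min_degree V E = Min (degree V E ` V)"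

definition dominated :: "'a set \<Rightarrow> ('a \<Rightarrow> 'a \<Rightarrow> bool) \<Rightarrow> 'a set \<Rightarrow> 'a set" where
  "dominated V E D = (\<Union>d\<in>D. closed_nbhd V E d)"

definition dominating :: "'a set \<Rightarrow> ('a \<Rightarrow> 'a \<Rightarrow> bool) \<Rightarrow> 'a set \<Rightarrow> bool" where
  "dominating V E D \<longleftrightarrow> V \<subseteq> dominated V E D"

text \<open>Value of the indicated domination game from position D (the set of vertices
  selected so far by Staller), with at most k further rounds available (fuel).
  Dominator indicates an undominated vertex v (minimising), Staller selects a vertex
  of N[v] (maximising); each round adds one new vertex of V to D, so with fuel
  card V starting from the empty set the game always terminates before fuel runs out.\<close>
fun game_val :: "'a set \<Rightarrow> ('a \<Rightarrow> 'a \<Rightarrow> bool) \<Rightarrow> nat \<Rightarrow> 'a set \<Rightarrow> nat" where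
  "game_val V E 0 D = 0"
| "game_val V E (Suc k) D =
     (if dominating V E D then 0
      else Min ((\<lambda>v. Max ((\<lambda>u. 1 + game_val V E k (insert u D)) ` closed_nbhd V E v))
                 ` (V - dominated V E D)))"

definition indicated_domination_number :: "'a set \<Rightarrow> ('a \<Rightarrow> 'a \<Rightarrow> bool) \<Rightarrow> nat" where
  "indicated_domination_number V E = game_val V E (card V) {}"

definition spanning_Kst_indep :: "'a set \<Rightarrow> ('a \<Rightarrow> 'a \<Rightarrow> bool) \<Rightarrow> nat \<Rightarrow> nat \<Rightarrow> bool" where
  "spanning_Kst_indep V E s t \<longleftrightarrow> (\<exists>A B. A \<union> B = V \<and> A \<inter> B = {} \<and> card A = s \<and> card B = t
      \<and> (\<forall>a\<in>A. \<forall>b\<in>B. E a b) \<and> (\<forall>b\<in>B. \<forall>b'\<in>B. \<not> E b b'))"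

end

theory Submission
  imports Defs
begin

text \<open>Every round dominates at least the indicated vertex, so from a position D at most
  |V - N[D]| rounds remain; as Staller's first selection u dominates deg u + 1 \<ge> \<delta> + 1 vertices,
  the game lasts at most n - \<delta> rounds. If V = A \<union> B with B independent and complete to A,
  Staller can always answer with a fresh vertex of B, so the game lasts at least |B| rounds.

  Conversely, after the first selection u with deg u = \<delta>, let U = V - N[u], so |U| = n - \<delta> - 1.
  If some z \<in> U has only closed neighbours y dominating at least two vertices of U, Dominator
  indicates z and the game ends after at most n - \<delta> - 1 rounds. Otherwise every z \<in> U has a
  closed neighbour dominating only z within U; since |U| > \<delta>, a counting argument shows that
  all of U \<union> {u} has neighbourhood exactly N(u), which is the required K(\<delta>, n - \<delta>).\<close>

lemma simple_graphD:
  assumes "simple_graph V E"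
  shows "finite V" "E u v \<Longrightarrow> u \<in> V" "E u v \<Longrightarrow> v \<in> V" "E u v \<Longrightarrow> E v u" "\<not> E v v"
  using assms unfolding simple_graph_def by blast+

definition neighbours :: "'a set \<Rightarrow> ('a \<Rightarrow> 'a \<Rightarrow> bool) \<Rightarrow> 'a \<Rightarrow> 'a set" where
  "neighbours V E v = {u \<in> V. E v u}"

lemma degree_eq_card_neighbours: "degree V E v = card (neighbours V E v)"
  unfolding degree_def neighbours_def ..

lemma min_degree_le_degree: "finite V \<Longrightarrow> v \<in> V \<Longrightarrow> min_degree V E \<le> degree V E v"
  unfolding min_degree_def by simp

lemma closed_nbhd_subset: "closed_nbhd V E v \<subseteq> V"
  unfolding closed_nbhd_def by blast

lemma finite_closed_nbhd: "finite V \<Longrightarrow> finite (closed_nbhd V E v)"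
  using closed_nbhd_subset finite_subset by metis

lemma closed_nbhd_self: "v \<in> V \<Longrightarrow> v \<in> closed_nbhd V E v"
  unfolding closed_nbhd_def by blast

lemma closed_nbhd_sym:
  "simple_graph V E \<Longrightarrow> v \<in> V \<Longrightarrow> u \<in> closed_nbhd V E v \<Longrightarrow> v \<in> closed_nbhd V E u"
  unfolding closed_nbhd_def simple_graph_def by blast

lemma closed_nbhd_eq_insert_neighbours:
  "v \<in> V \<Longrightarrow> closed_nbhd V E v = insert v (neighbours V E v)"
  unfolding closed_nbhd_def neighbours_def by blast

lemma card_closed_nbhd:
  assumes "simple_graph V E" "v \<in> V"
  shows "card (closed_nbhd V E v) = Suc (degree V E v)"
proof -
  have "v \<notin> neighbours V E v" "finite (neighbours V E v)"
    using simple_graphD[OF assms(1)] unfolding neighbours_def by auto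
  then show ?thesis
    using closed_nbhd_eq_insert_neighbours[OF assms(2)] by (simp add: degree_eq_card_neighbours)
qed

lemma dominated_empty [simp]: "dominated V E {} = {}"
  unfolding dominated_def by simp

lemma dominated_insert [simp]: "dominated V E (insert u D) = closed_nbhd V E u \<union> dominated V E D"
  unfolding dominated_def by simp

lemma dominated_subset: "dominated V E D \<subseteq> V"
  unfolding dominated_def closed_nbhd_def by blast

lemma card_undominated_insert:
  assumes "finite V"
  shows "card (V - dominated V E (insert u D)) + card (closed_nbhd V E u - dominated V E D)
         = card (V - dominated V E D)"
proof -
  have new: "closed_nbhd V E u - dominated V E D \<subseteq> V - dominated V E D"
    using closed_nbhd_subset[of V E u] by blast
  have "V - dominated V E (insert u D)
        = (V - dominated V E D) - (closed_nbhd V E u - dominated V E D)"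
    unfolding dominated_insert by blast
  moreover have "card (closed_nbhd V E u - dominated V E D) \<le> card (V - dominated V E D)"
    using card_mono[OF _ new] assms by blast
  ultimately show ?thesis
    using card_Diff_subset[OF finite_subset[OF new] new] assms by simp
qed

subsection \<open>Upper bounds on the game\<close>

lemma game_val_Suc_le:
  assumes sg: "simple_graph V E" and v: "v \<in> V - dominated V E D"
    and response: "\<And>u. u \<in> closed_nbhd V E v \<Longrightarrow> 1 + game_val V E k (insert u D) \<le> c"
  shows "game_val V E (Suc k) D \<le> c"
proof -
  define F where "F = (\<lambda>v. Max ((\<lambda>u. 1 + game_val V E k (insert u D)) ` closed_nbhd V E v))"
  have fin: "finite V" using simple_graphD(1)[OF sg] .
  have "\<not> dominating V E D"
    using v unfolding dominating_def by blast
  then have "game_val V E (Suc k) D = Min (F ` (V - dominated V E D))"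
    unfolding F_def by simp
  also have "\<dots> \<le> F v"
    using fin v by (intro Min_le) simp_all
  also have "\<dots> \<le> c"
    unfolding F_def
  proof (rule Max.boundedI)
    show "finite ((\<lambda>u. 1 + game_val V E k (insert u D)) ` closed_nbhd V E v)"
      using finite_closed_nbhd[OF fin] by blast
    show "(\<lambda>u. 1 + game_val V E k (insert u D)) ` closed_nbhd V E v \<noteq> {}"
      using v closed_nbhd_self[of v V E] by blast
  qed (use response in blast)
  finally show ?thesis .
qed

lemma game_val_le_card_undominated:
  assumes sg: "simple_graph V E"
  shows "game_val V E k D \<le> card (V - dominated V E D)"
proof (induction k arbitrary: D)
  case 0
  then show ?case by simp
next
  case (Suc k)
  show ?case
  proof (cases "dominating V E D")
    case True
    then show ?thesis by simp
  next
    case False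
    then obtain v where v: "v \<in> V - dominated V E D"
      unfolding dominating_def by blast
    show ?thesis
    proof (rule game_val_Suc_le[OF sg v])
      fix u assume "u \<in> closed_nbhd V E v"
      then have "v \<in> closed_nbhd V E u - dominated V E D"
        using closed_nbhd_sym[OF sg, of v u] v by blast
      moreover have "finite (closed_nbhd V E u - dominated V E D)"
        using finite_closed_nbhd[OF simple_graphD(1)[OF sg]] by blast
      ultimately have "card (closed_nbhd V E u - dominated V E D) \<noteq> 0"
        by auto
      then show "1 + game_val V E k (insert u D) \<le> card (V - dominated V E D)"
        using Suc.IH[of "insert u D"] card_undominated_insert[OF simple_graphD(1)[OF sg], of E u D]
        by linarith
    qed
  qed
qed

lemma game_val_Suc_le_if_new_dominated:
  assumes sg: "simple_graph V E" and z: "z \<in> V - dominated V E D"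
    and new: "\<And>y. y \<in> closed_nbhd V E z \<Longrightarrow> m \<le> card (closed_nbhd V E y - dominated V E D)"
  shows "game_val V E (Suc k) D + m \<le> card (V - dominated V E D) + 1"
proof -
  have bound: "game_val V E k (insert y D) + m \<le> card (V - dominated V E D)"
    if "y \<in> closed_nbhd V E z" for y
    using game_val_le_card_undominated[OF sg, of k "insert y D"] new[OF that]
      card_undominated_insert[OF simple_graphD(1)[OF sg], of E y D]
    by linarith
  have "game_val V E (Suc k) D \<le> card (V - dominated V E D) + 1 - m"
    by (rule game_val_Suc_le[OF sg z]) (use bound in fastforce)
  moreover have "m \<le> card (V - dominated V E D)"
    using bound[of z] z closed_nbhd_self[of z V E] by force
  ultimately show ?thesis by linarith
qed

lemma indicated_domination_number_le:
  assumes sg: "simple_graph V E" and "V \<noteq> {}"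
  shows "indicated_domination_number V E \<le> card V - min_degree V E"
proof -
  obtain x where x: "x \<in> V" using assms(2) by blast
  have fin: "finite V" using simple_graphD(1)[OF sg] .
  have "0 < card V" using x fin by (auto simp: card_gt_0_iff)
  then obtain k where k: "card V = Suc k" using gr0_implies_Suc by blast
  have "game_val V E (Suc k) {} + Suc (min_degree V E) \<le> card (V - dominated V E {}) + 1"
  proof (rule game_val_Suc_le_if_new_dominated[OF sg])
    show "x \<in> V - dominated V E {}" using x by simp
    fix y assume "y \<in> closed_nbhd V E x"
    then have "y \<in> V" using closed_nbhd_subset[of V E x] by blast
    then have "card (closed_nbhd V E y) = Suc (degree V E y)" "min_degree V E \<le> degree V E y"
      using card_closed_nbhd[OF sg] min_degree_le_degree[OF fin] by blast+
    then show "Suc (min_degree V E) \<le> card (closed_nbhd V E y - dominated V E {})"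
      by simp
  qed
  moreover have "indicated_domination_number V E = game_val V E (Suc k) {}"
    unfolding indicated_domination_number_def k ..
  ultimately show ?thesis
    unfolding dominated_empty Diff_empty by linarith
qed

subsection \<open>Staller's strategy against a spanning complete bipartite subgraph\<close>

lemma response_in_independent_part:
  assumes sg: "simple_graph V E"
    and complete: "\<forall>a \<in> V - B. \<forall>b \<in> B. E a b" and "B \<noteq> {}" "D \<subseteq> B"
    and v: "v \<in> V - dominated V E D"
  obtains u where "u \<in> closed_nbhd V E v" "u \<in> B - D"
proof (cases "v \<in> B")
  case True
  have "v \<in> closed_nbhd V E v"
    using v closed_nbhd_self[of v V E] by blast
  moreover from this have "v \<notin> D"
    using v unfolding dominated_def by blast
  ultimately show ?thesis
    using that True by blast
next
  case False
  obtain b where b: "b \<in> B" using \<open>B \<noteq> {}\<close> by blast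
  have "E v b" using complete False v b by blast
  then have "b \<in> closed_nbhd V E v" "v \<in> closed_nbhd V E b"
    using simple_graphD[OF sg] unfolding closed_nbhd_def by blast+
  moreover have "b \<notin> D"
    using v \<open>v \<in> closed_nbhd V E b\<close> unfolding dominated_def by blast
  ultimately show ?thesis
    using that b by blast
qed

lemma game_val_ge_card_independent_part:
  assumes sg: "simple_graph V E"
    and complete: "\<forall>a \<in> V - B. \<forall>b \<in> B. E a b" and indep: "\<forall>b \<in> B. \<forall>b' \<in> B. \<not> E b b'"
    and "B \<subseteq> V" "B \<noteq> {}"
  shows "D \<subseteq> B \<Longrightarrow> min k (card (B - D)) \<le> game_val V E k D"
proof (induction k arbitrary: D)
  case 0
  then show ?case by simp
next
  case (Suc k)
  have finB: "finite B" using \<open>B \<subseteq> V\<close> simple_graphD(1)[OF sg] finite_subset by blast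
  show ?case
  proof (cases "dominating V E D")
    case True
    have "B \<subseteq> D"
    proof
      fix b assume b: "b \<in> B"
      then obtain d where "d \<in> D" "b \<in> closed_nbhd V E d"
        using True \<open>B \<subseteq> V\<close> unfolding dominating_def dominated_def by blast
      then show "b \<in> D"
        using Suc.prems indep b unfolding closed_nbhd_def by blast
    qed
    then have "card (B - D) = 0" by (metis Diff_eq_empty_iff card.empty)
    with True show ?thesis by simp
  next
    case False
    have "min (Suc k) (card (B - D))
          \<le> Max ((\<lambda>u. 1 + game_val V E k (insert u D)) ` closed_nbhd V E v)"
      if v: "v \<in> V - dominated V E D" for v
    proof -
      obtain u where u: "u \<in> closed_nbhd V E v" "u \<in> B - D"
        using response_in_independent_part[OF sg complete \<open>B \<noteq> {}\<close> Suc.prems v] .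
      have "B - insert u D = (B - D) - {u}" by blast
      then have "card (B - insert u D) + 1 = card (B - D)"
        using u(2) finB card.remove[of "B - D" u] by simp
      moreover have "min k (card (B - insert u D)) \<le> game_val V E k (insert u D)"
        using Suc.IH[of "insert u D"] Suc.prems u by blast
      moreover have "1 + game_val V E k (insert u D)
                     \<le> Max ((\<lambda>u. 1 + game_val V E k (insert u D)) ` closed_nbhd V E v)"
        using u(1) finite_closed_nbhd[OF simple_graphD(1)[OF sg]] by (intro Max_ge) simp_all
      ultimately show ?thesis by linarith
    qed
    moreover have "V - dominated V E D \<noteq> {}"
      using False dominated_subset unfolding dominating_def by blast
    ultimately show ?thesis
      using False simple_graphD(1)[OF sg] by (simp add: Min_ge_iff)
  qed
qed

lemma indicated_domination_number_ge_if_spanning_Kst_indep: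
  assumes sg: "simple_graph V E" and "spanning_Kst_indep V E s t" and "0 < t"
  shows "t \<le> indicated_domination_number V E"
proof -
  obtain A B where AB: "A \<union> B = V" "A \<inter> B = {}" "card B = t"
      "\<forall>a\<in>A. \<forall>b\<in>B. E a b" "\<forall>b\<in>B. \<forall>b'\<in>B. \<not> E b b'"
    using assms(2) unfolding spanning_Kst_indep_def by blast
  have "B \<noteq> {}" using AB(3) \<open>0 < t\<close> by auto
  then have "min (card V) (card B) \<le> game_val V E (card V) {}"
    using game_val_ge_card_independent_part[OF sg, of B "{}" "card V"] AB by auto
  moreover have "card B \<le> card V"
    using AB(1) simple_graphD(1)[OF sg] by (metis Un_upper2 card_mono)
  ultimately show ?thesis
    unfolding indicated_domination_number_def AB(3)[symmetric] by simp
qed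

subsection \<open>The extremal structure\<close>

lemma neighbours_eq_if_closed_nbhd_meets_outside_only_self:
  assumes sg: "simple_graph V E" and u: "u \<in> V" and z: "z \<in> V - closed_nbhd V E u"
    and only_self: "closed_nbhd V E z \<inter> (V - closed_nbhd V E u) = {z}"
    and "degree V E u \<le> degree V E z"
  shows "neighbours V E z = neighbours V E u"
proof -
  have sub: "neighbours V E z \<subseteq> neighbours V E u"
  proof
    fix w assume w: "w \<in> neighbours V E z"
    then have "w \<in> closed_nbhd V E z" "w \<noteq> z"
      using simple_graphD(5)[OF sg] unfolding neighbours_def closed_nbhd_def by auto
    then have "w \<in> closed_nbhd V E u"
      using only_self w unfolding neighbours_def by blast
    moreover have "w \<noteq> u"
      using w z simple_graphD(4)[OF sg] unfolding neighbours_def closed_nbhd_def by blast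
    ultimately show "w \<in> neighbours V E u"
      using closed_nbhd_eq_insert_neighbours[OF u] by blast
  qed
  moreover have "finite (neighbours V E u)"
    using simple_graphD(1)[OF sg] unfolding neighbours_def by simp
  ultimately show ?thesis
    using card_subset_eq \<open>degree V E u \<le> degree V E z\<close> card_mono
    unfolding degree_eq_card_neighbours by (metis le_antisym)
qed

text \<open>The map z \<mapsto> y is injective, and there are more vertices z than neighbours of u, so
  some z is its own y; minimality of the degree then forces N(z) = N(u). As this z is adjacent
  to all of N(u), no other y can lie in N(u) either, so every z is its own y.\<close>
lemma neighbours_eq_outside_closed_nbhd:
  assumes sg: "simple_graph V E" and u: "u \<in> V" and du: "degree V E u = min_degree V E"
    and big: "2 * min_degree V E + 2 \<le> card V"
    and isolating: "\<forall>z \<in> V - closed_nbhd V E u. \<exists>y \<in> closed_nbhd V E z.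
                    closed_nbhd V E y \<inter> (V - closed_nbhd V E u) = {z}"
  shows "\<forall>z \<in> V - closed_nbhd V E u. neighbours V E z = neighbours V E u"
proof -
  define U where "U = V - closed_nbhd V E u"
  define A where "A = neighbours V E u"
  have fin: "finite V" using simple_graphD(1)[OF sg] .
  obtain f where f: "\<And>z. z \<in> U \<Longrightarrow> f z \<in> closed_nbhd V E z \<and> closed_nbhd V E (f z) \<inter> U = {z}"
    using bchoice[of U "\<lambda>z y. y \<in> closed_nbhd V E z \<and> closed_nbhd V E y \<inter> U = {z}"]
      isolating unfolding U_def by blast
  have twin: "neighbours V E z = A" if z: "z \<in> U" "f z \<notin> A" for z
  proof -
    have "f z \<in> V" "f z \<noteq> u"
      using f[OF z(1)] z(1) simple_graphD(4)[OF sg] unfolding U_def closed_nbhd_def by auto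
    then have "f z \<in> U"
      using z(2) closed_nbhd_eq_insert_neighbours[OF u] unfolding U_def A_def by blast
    then have "f z = z"
      using f[OF z(1)] closed_nbhd_self[of "f z" V E] unfolding U_def by blast
    then show ?thesis
      using neighbours_eq_if_closed_nbhd_meets_outside_only_self[OF sg u] f[OF z(1)] z(1)
        du min_degree_le_degree[OF fin] unfolding U_def A_def by force
  qed
  have "inj_on f U"
    by (rule inj_onI) (metis f singleton_inject)
  moreover have "card A < card U"
  proof -
    have "card (closed_nbhd V E u) = Suc (card A)"
      using card_closed_nbhd[OF sg u] unfolding A_def degree_eq_card_neighbours .
    moreover have "card U + card (closed_nbhd V E u) = card V"
      using card_Diff_subset[OF finite_closed_nbhd[OF fin] closed_nbhd_subset]
        card_mono[OF fin closed_nbhd_subset] unfolding U_def by (metis le_add_diff_inverse2)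
    ultimately show ?thesis
      using big du unfolding A_def degree_eq_card_neighbours by linarith
  qed
  ultimately obtain z0 where z0: "z0 \<in> U" "f z0 \<notin> A"
    using card_inj_on_le[of f U A] fin unfolding A_def neighbours_def by fastforce
  have "f z \<notin> A" if z: "z \<in> U" for z
  proof
    assume "f z \<in> A"
    then have "z0 \<in> closed_nbhd V E (f z) \<inter> U"
      using twin[OF z0] z0(1) simple_graphD(4)[OF sg]
      unfolding neighbours_def closed_nbhd_def U_def by blast
    then have "z0 = z" using f[OF z] by blast
    then show False using z0(2) \<open>f z \<in> A\<close> by blast
  qed
  then show ?thesis
    using twin unfolding U_def A_def by blast
qed

lemma spanning_Kst_indep_if_neighbours_eq:
  assumes sg: "simple_graph V E" and u: "u \<in> V"
    and twins: "\<forall>z \<in> V - closed_nbhd V E u. neighbours V E z = neighbours V E u"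
  shows "spanning_Kst_indep V E (degree V E u) (card V - degree V E u)"
proof -
  define A where "A = neighbours V E u"
  have AV: "A \<subseteq> V" unfolding A_def neighbours_def by blast
  have all_twins: "neighbours V E b = A" if "b \<in> V - A" for b
    using that twins closed_nbhd_eq_insert_neighbours[OF u] unfolding A_def by (cases "b = u") auto
  show ?thesis
    unfolding spanning_Kst_indep_def
  proof (intro exI conjI)
    show "A \<union> (V - A) = V" "A \<inter> (V - A) = {}" using AV by blast+
    show "card A = degree V E u" unfolding A_def degree_eq_card_neighbours ..
    then show "card (V - A) = card V - degree V E u"
      using card_Diff_subset[OF finite_subset[OF AV] AV] simple_graphD(1)[OF sg] by simp
    show "\<forall>a\<in>A. \<forall>b\<in>V - A. E a b"
      using all_twins simple_graphD(4)[OF sg] unfolding neighbours_def by blast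
    show "\<forall>b\<in>V - A. \<forall>b'\<in>V - A. \<not> E b b'"
      using all_twins unfolding neighbours_def by blast
  qed
qed

subsection \<open>Dominator's improvement when the structure is absent\<close>

lemma game_val_singleton_le_if_not_spanning_Kst_indep:
  assumes sg: "simple_graph V E" and u: "u \<in> V"
    and big: "2 * min_degree V E + 2 \<le> card V"
    and no_Kst: "\<not> spanning_Kst_indep V E (min_degree V E) (card V - min_degree V E)"
  shows "game_val V E (Suc k) {u} + min_degree V E + 2 \<le> card V"
proof -
  define U where "U = V - closed_nbhd V E u"
  have fin: "finite V" using simple_graphD(1)[OF sg] .
  have split: "card U + Suc (degree V E u) = card V"
    using card_undominated_insert[OF fin, of E u "{}"] card_closed_nbhd[OF sg u]
    unfolding U_def by simp
  have U_undominated: "U = V - dominated V E {u}"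
    unfolding U_def by simp
  show ?thesis
  proof (cases "degree V E u = min_degree V E")
    case False
    then have "min_degree V E < degree V E u"
      using min_degree_le_degree[OF fin u, of E] by simp
    then show ?thesis
      using game_val_le_card_undominated[OF sg, of "Suc k" "{u}"] split U_undominated by simp
  next
    case True
    have "\<exists>z \<in> U. \<forall>y \<in> closed_nbhd V E z. closed_nbhd V E y \<inter> U \<noteq> {z}"
    proof (rule ccontr)
      assume "\<not> ?thesis"
      then have "\<forall>z \<in> V - closed_nbhd V E u. \<exists>y \<in> closed_nbhd V E z.
                   closed_nbhd V E y \<inter> (V - closed_nbhd V E u) = {z}"
        unfolding U_def by blast
      then have "spanning_Kst_indep V E (degree V E u) (card V - degree V E u)"
        by (rule spanning_Kst_indep_if_neighbours_eq[OF sg u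
              neighbours_eq_outside_closed_nbhd[OF sg u True big]])
      with no_Kst True show False by simp
    qed
    then obtain z where z: "z \<in> U"
      and shared: "\<And>y. y \<in> closed_nbhd V E z \<Longrightarrow> closed_nbhd V E y \<inter> U \<noteq> {z}"
      by blast
    have "2 \<le> card (closed_nbhd V E y - dominated V E {u})" if y: "y \<in> closed_nbhd V E z" for y
    proof -
      have "z \<in> closed_nbhd V E y \<inter> U"
        using closed_nbhd_sym[OF sg _ y] z unfolding U_def by blast
      then obtain z' where z': "{z, z'} \<subseteq> closed_nbhd V E y - dominated V E {u}" "z' \<noteq> z"
        using shared[OF y] closed_nbhd_subset[of V E y] unfolding U_undominated by blast
      have "card {z, z'} \<le> card (closed_nbhd V E y - dominated V E {u})"
        using z'(1) finite_closed_nbhd[OF fin, of E y] by (intro card_mono) simp_all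
      then show ?thesis
        using z'(2) by simp
    qed
    then have "game_val V E (Suc k) {u} + 2 \<le> card U + 1"
      unfolding U_undominated
      by (rule game_val_Suc_le_if_new_dominated[OF sg z[unfolded U_undominated]])
    then show ?thesis
      using split True by linarith
  qed
qed

lemma indicated_domination_number_lt_if_not_spanning_Kst_indep:
  assumes sg: "simple_graph V E" and big: "2 * min_degree V E + 2 \<le> card V"
    and no_Kst: "\<not> spanning_Kst_indep V E (min_degree V E) (card V - min_degree V E)"
  shows "indicated_domination_number V E < card V - min_degree V E"
proof -
  define k where "k = card V - 2"
  have k: "card V = Suc (Suc k)"
    using big unfolding k_def by simp
  then obtain x where "x \<in> V"
    by fastforce
  then have x: "x \<in> V - dominated V E {}" by simp
  have "game_val V E (Suc (Suc k)) {} \<le> card V - min_degree V E - 1"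
  proof (rule game_val_Suc_le[OF sg x])
    fix u assume "u \<in> closed_nbhd V E x"
    then have "u \<in> V" using closed_nbhd_subset[of V E x] by blast
    then show "1 + game_val V E (Suc k) (insert u {}) \<le> card V - min_degree V E - 1"
      using game_val_singleton_le_if_not_spanning_Kst_indep[OF sg _ big no_Kst, of u k] by linarith
  qed
  moreover have "indicated_domination_number V E = game_val V E (Suc (Suc k)) {}"
    unfolding indicated_domination_number_def k ..
  ultimately show ?thesis
    using big by linarith
qed

theorem theorem4p1:
  fixes V :: "'a set" and E :: "'a \<Rightarrow> 'a \<Rightarrow> bool"
  assumes "simple_graph V E"
    and "card V \<ge> 2 * min_degree V E + 2"
  shows "indicated_domination_number V E = card V - min_degree V E \<longleftrightarrow>
         spanning_Kst_indep V E (min_degree V E) (card V - min_degree V E)"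
proof
  assume "indicated_domination_number V E = card V - min_degree V E"
  then show "spanning_Kst_indep V E (min_degree V E) (card V - min_degree V E)"
    using indicated_domination_number_lt_if_not_spanning_Kst_indep[OF assms] by fastforce
next
  assume "spanning_Kst_indep V E (min_degree V E) (card V - min_degree V E)"
  then have "card V - min_degree V E \<le> indicated_domination_number V E"
    using indicated_domination_number_ge_if_spanning_Kst_indep[OF assms(1)] assms(2) by simp
  moreover have "V \<noteq> {}"
    using assms(2) by auto
  ultimately show "indicated_domination_number V E = card V - min_degree V E"
    using indicated_domination_number_le[OF assms(1)] by (meson le_antisym)
qed

end
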